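(* Let $(f_n)$ be twice differentiable strictly concave functions on $\mathbb R^d$, each with unique maximizer $0$, such that $-\nabla^2f_n(x)\succeq\tfrac12I_d$ for all $x$ and $n$. Let $\gamma\in\mathbb R^d$ and $\beta_n\in\mathbb R^d$ with $\gamma^{T}\beta_n\to\infty$. Then for every $\delta>0$ there is a constant $C>0$ depending only on $\delta$ (and $d$) such that for all sufficiently large $n$, $\int_{\mathbb R^d}\gamma^{T}(x+\beta_n)\exp(f_n(x))dx>0$ and $\frac{\big|\int_{\|x\|\ge C}\gamma^{T}(x+\beta_n)\exp(f_n(x))dx\big|}{\int_{\mathbb R^d}\gamma^{T}(x+\beta_n)\exp(f_n(x))dx}\le\delta.$ *)

theory Defs
  imports "HOL-Analysis.Analysis"
begin

definition strictly_concave_on :: "'a::real_vector set \<Rightarrow> ('a \<Rightarrow> real) \<Rightarrow> bool" where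
  "strictly_concave_on S f \<longleftrightarrow>
     (\<forall>x\<in>S. \<forall>y\<in>S. \<forall>t::real. x \<noteq> y \<and> 0 < t \<and> t < 1 \<longrightarrow>
        (1 - t) * f x + t * f y < f ((1 - t) *\<^sub>R x + t *\<^sub>R y))"

end

theory Submission
  imports Defs "HOL-Real_Asymp.Real_Asymp"
begin

(* Along every ray the Hessian bound, together with the maximum at 0, gives
   f(2y) <= f(y) - |y|^2/2.  Substituting x = 2y therefore bounds any integral of
   e^f h by 2^d times the integral of e^f(y) e^(-|y|^2/2) h(2y), and the Gaussian factor
   yields, uniformly in n, the first moment bound  int |x| e^f <= 2^(d+1) int e^f  and
   the tail bound  int_{|x|>=C} e^f <= 2^d e^(-C^2/8) int e^f  (the same substitution,
   applied to truncations to balls, shows that int e^f is finite).  With Z = int e^f the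
   denominator is at least (gamma.beta_n - 2^(d+1)|gamma|) Z, the tail integral at most
   (gamma.beta_n 2^d e^(-C^2/8) + 2^(d+1)|gamma|) Z, so C with 2^d e^(-C^2/8) <= delta/2
   works as soon as gamma.beta_n is large. *)

lemma nn_integral_lborel_affine:
  fixes f :: "'a::euclidean_space \<Rightarrow> ennreal" and c :: real
  assumes [measurable]: "f \<in> borel_measurable borel" and c: "c \<noteq> 0"
  shows "(\<integral>\<^sup>+x. f x \<partial>lborel) = ennreal (\<bar>c\<bar>^DIM('a)) * (\<integral>\<^sup>+x. f (t + c *\<^sub>R x) \<partial>lborel)"
  by (subst lborel_affine[OF c, of t])
     (simp add: nn_integral_density nn_integral_distr nn_integral_cmult)

lemma exists_radius_gaussian_tail_le:
  fixes A c \<epsilon> :: real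
  assumes "c > 0" "\<epsilon> > 0"
  shows "\<exists>r>0. A * exp (-(r^2/c)) \<le> \<epsilon>"
proof -
  have "((\<lambda>r. A * exp (-(r^2/c))) \<longlongrightarrow> 0) at_top"
    using \<open>c > 0\<close> by real_asymp
  then have "\<forall>\<^sub>F r in at_top. A * exp (-(r^2/c)) < \<epsilon>"
    using \<open>\<epsilon> > 0\<close> by (rule order_tendstoD(2))
  then have "\<forall>\<^sub>F r in at_top. A * exp (-(r^2/c)) < \<epsilon> \<and> r > 0"
    using eventually_gt_at_top[of 0] by (rule eventually_conj)
  then obtain N where "\<forall>r\<ge>N. A * exp (-(r^2/c)) < \<epsilon> \<and> r > 0"
    unfolding eventually_at_top_linorder by blast
  then show ?thesis
    by (intro exI[of _ N]) auto
qed

lemma DERIV2_le_imp_le: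
  fixes \<phi> \<phi>' \<phi>'' :: "real \<Rightarrow> real" and c :: real
  assumes \<phi>: "\<And>t. DERIV \<phi> t :> \<phi>' t" and \<phi>': "\<And>t. DERIV \<phi>' t :> \<phi>'' t"
    and concave: "\<And>t. \<phi>'' t \<le> -c" and critical: "\<phi>' 0 = 0"
  shows "\<phi> 2 \<le> \<phi> 1 - 3/2 * c"
proof -
  have slope: "\<phi>' t \<le> - c * t" if "0 \<le> t" for t
  proof -
    have "\<phi>' t + c * t \<le> \<phi>' 0 + c * 0"
    proof (rule DERIV_nonpos_imp_nonincreasing[OF that])
      fix s
      show "\<exists>y. DERIV (\<lambda>t. \<phi>' t + c * t) s :> y \<and> y \<le> 0"
        using concave[of s] by (intro exI[of _ "\<phi>'' s + c"]) (auto intro!: derivative_eq_intros \<phi>')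
    qed
    then show ?thesis using critical by simp
  qed
  have "\<phi> 2 + c * 2^2/2 \<le> \<phi> 1 + c * 1^2/2"
  proof (rule DERIV_nonpos_imp_nonincreasing[of 1 2])
    fix s :: real
    assume "1 \<le> s"
    then show "\<exists>y. DERIV (\<lambda>t. \<phi> t + c * t^2/2) s :> y \<and> y \<le> 0"
      using slope[of s] by (intro exI[of _ "\<phi>' s + c * s"]) (auto intro!: derivative_eq_intros \<phi>)
  qed simp
  then show ?thesis by simp
qed

lemma gradient_eq_0_at_maximum:
  fixes f :: "'a::real_inner \<Rightarrow> real"
  assumes "(f has_derivative (\<lambda>h. g \<bullet> h)) (at x)" and "\<And>y. f y \<le> f x"
  shows "g = 0"
proof -
  have "(\<lambda>h. g \<bullet> h) = (\<lambda>h. 0)"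
    using assms by (intro has_derivative_local_max) auto
  then show ?thesis by (metis inner_eq_zero_iff)
qed

lemma hessian_bound_imp_doubling_le:
  fixes f :: "'a::real_inner \<Rightarrow> real" and grad :: "'a \<Rightarrow> 'a" and H :: "'a \<Rightarrow> 'a \<Rightarrow> 'a"
  assumes f: "\<And>x. (f has_derivative (\<lambda>h. grad x \<bullet> h)) (at x)"
    and grad: "\<And>x. (grad has_derivative H x) (at x)"
    and critical: "grad 0 = 0"
    and hessian: "\<And>x v. v \<bullet> H x v \<le> - \<kappa> * (v \<bullet> v)"
  shows "f (2 *\<^sub>R y) \<le> f y - 3/2 * \<kappa> * (norm y)^2"
proof -
  have line: "((\<lambda>t. t *\<^sub>R y) has_derivative (\<lambda>s. s *\<^sub>R y)) (at t)" for t :: real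
    by (auto intro!: derivative_eq_intros)
  have "DERIV (\<lambda>t. f (t *\<^sub>R y)) t :> grad (t *\<^sub>R y) \<bullet> y" for t
    using has_derivative_compose[OF line f]
    by (simp add: has_field_derivative_def mult_commute_abs)
  moreover have "DERIV (\<lambda>t. grad (t *\<^sub>R y) \<bullet> y) t :> H (t *\<^sub>R y) y \<bullet> y" for t
  proof -
    have "linear (H (t *\<^sub>R y))"
      using grad has_derivative_linear by blast
    then have "((\<lambda>t. grad (t *\<^sub>R y)) has_derivative (\<lambda>s. s *\<^sub>R H (t *\<^sub>R y) y)) (at t)"
      using has_derivative_compose[OF line grad, of t] by (simp add: linear_scale)
    then show ?thesis
      by (auto simp: has_field_derivative_def intro!: derivative_eq_intros)
  qed
  moreover have "H (t *\<^sub>R y) y \<bullet> y \<le> - (\<kappa> * (norm y)^2)" for t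
    using hessian[of y "t *\<^sub>R y"] by (simp add: inner_commute power2_norm_eq_inner)
  ultimately have "f (2 *\<^sub>R y) \<le> f (1 *\<^sub>R y) - 3/2 * (\<kappa> * (norm y)^2)"
    using critical
    by (intro DERIV2_le_imp_le[where \<phi>' = "\<lambda>t. grad (t *\<^sub>R y) \<bullet> y"
          and \<phi>'' = "\<lambda>t. H (t *\<^sub>R y) y \<bullet> y"]) auto
  then show ?thesis by simp
qed

lemma ennreal_le_twice_if_le_add_half:
  fixes x a :: ennreal
  assumes "x < \<infinity>" and "x \<le> a + x / 2"
  shows "x \<le> 2 * a"
proof (cases "a = \<infinity>")
  case False
  obtain x' where x': "x = ennreal x'" "0 \<le> x'" using assms(1) by (cases x) auto
  obtain a' where a': "a = ennreal a'" "0 \<le> a'" using False by (cases a) auto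
  have "x / 2 = ennreal (x'/2)"
    using x' divide_ennreal[of x' 2] by simp
  then have "ennreal x' \<le> ennreal (a' + x'/2)"
    using assms(2) x' a' by simp
  then have "x' \<le> 2 * a'"
    using a' x' by (subst (asm) ennreal_le_iff) auto
  then have "ennreal x' \<le> ennreal (2 * a')"
    by (rule ennreal_leI)
  then show ?thesis
    using x' a' by (simp add: ennreal_mult)
qed simp

lemma integrable_integral_le_if_nn_integral_le:
  fixes g :: "'a \<Rightarrow> real"
  assumes [measurable]: "g \<in> borel_measurable M" and nonneg: "\<And>x. 0 \<le> g x"
    and le: "(\<integral>\<^sup>+x. g x \<partial>M) \<le> ennreal B" and "0 \<le> B"
  shows "integrable M g" "integral\<^sup>L M g \<le> B"
proof -
  show integrable: "integrable M g"
    using le nonneg by (intro integrableI_nonneg) (auto simp: le_less_trans)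
  have "ennreal (integral\<^sup>L M g) \<le> ennreal B"
    using le nonneg by (simp add: nn_integral_eq_integral[OF integrable])
  moreover have "0 \<le> integral\<^sup>L M g"
    using nonneg by simp
  ultimately show "integral\<^sup>L M g \<le> B"
    using \<open>0 \<le> B\<close> by simp
qed

lemma mult_exp_neg_half_square_le_1:
  fixes r :: real
  shows "r * exp (-(r^2/2)) \<le> 1"
proof -
  have "r \<le> 1 + r^2/2"
    using zero_le_power2[of "r - 1"] by (simp add: power2_diff field_simps)
  also have "\<dots> \<le> exp (r^2/2)"
    by (rule exp_ge_add_one_self)
  finally show ?thesis
    by (simp add: exp_minus field_simps)
qed

lemma abs_inner_add_mult_le:
  fixes \<gamma> x :: "'a::real_inner"
  assumes "0 \<le> e"
  shows "\<bar>(\<gamma> \<bullet> x + a) * e\<bar> \<le> (\<bar>a\<bar> + norm \<gamma> * norm x) * e"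
proof -
  have "\<bar>\<gamma> \<bullet> x + a\<bar> \<le> \<bar>a\<bar> + norm \<gamma> * norm x"
    using Cauchy_Schwarz_ineq2[of \<gamma> x] by linarith
  then show ?thesis
    using assms by (simp add: abs_mult mult_right_mono)
qed

locale doubling_decay =
  fixes f :: "'a::euclidean_space \<Rightarrow> real"
  assumes continuous: "continuous_on UNIV f"
    and doubling: "\<And>y. f (2 *\<^sub>R y) \<le> f y - (norm y)^2/2"
begin

lemma borel_measurable [measurable]: "f \<in> borel_measurable borel"
  using continuous by (rule borel_measurable_continuous_onI)

lemma nn_integral_exp_le:
  fixes g :: "'a \<Rightarrow> real"
  assumes [measurable]: "g \<in> borel_measurable borel" and nonneg: "\<And>x. 0 \<le> g x"
  shows "(\<integral>\<^sup>+x. exp (f x) * g x \<partial>lborel)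
    \<le> 2^DIM('a) * (\<integral>\<^sup>+y. exp (f y - (norm y)^2/2) * g (2 *\<^sub>R y) \<partial>lborel)"
proof -
  have "(\<integral>\<^sup>+x. exp (f x) * g x \<partial>lborel)
      = ennreal (\<bar>2\<bar>^DIM('a)) * (\<integral>\<^sup>+y. exp (f (2 *\<^sub>R y)) * g (2 *\<^sub>R y) \<partial>lborel)"
    using nn_integral_lborel_affine[of "\<lambda>x. exp (f x) * g x" 2 0] by simp
  also have "\<dots> \<le> ennreal (\<bar>2\<bar>^DIM('a)) * (\<integral>\<^sup>+y. exp (f y - (norm y)^2/2) * g (2 *\<^sub>R y) \<partial>lborel)"
  proof (intro mult_left_mono nn_integral_mono ennreal_leI)
    fix y :: 'a
    show "exp (f (2 *\<^sub>R y)) * g (2 *\<^sub>R y) \<le> exp (f y - (norm y)^2/2) * g (2 *\<^sub>R y)"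
      using doubling[of y] nonneg by (intro mult_right_mono) auto
  qed auto
  finally show ?thesis
    using ennreal_power[of 2 "DIM('a)"] by simp
qed

lemma nn_integral_exp_cball_finite: "(\<integral>\<^sup>+x. exp (f x) * indicator (cball 0 R) x \<partial>lborel) < \<infinity>"
proof -
  have "integrable lborel (\<lambda>x. indicator (cball (0::'a) R) x *\<^sub>R exp (f x))"
    by (rule borel_integrable_compact) (auto intro!: continuous_on_exp continuous_on_subset[OF continuous])
  from integrableD(2)[OF this] show ?thesis
    by (simp add: mult.commute less_top ennreal_mult' flip: ennreal_indicator)
qed

lemma nn_integral_exp_cball_le:
  assumes radius: "2^DIM('a) * exp (-(\<rho>^2/2)) \<le> 1/2" and "0 \<le> \<rho>" "0 \<le> R"
  shows "(\<integral>\<^sup>+x. exp (f x) * indicator (cball 0 R) x \<partial>lborel)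
    \<le> 2^(DIM('a)+1) * (\<integral>\<^sup>+x. exp (f x) * indicator (cball 0 \<rho>) x \<partial>lborel)"
proof -
  define W where "W r = (\<integral>\<^sup>+x. exp (f x) * indicator (cball (0::'a) r) x \<partial>lborel)" for r
  define D where "D = DIM('a)"
  have [measurable]: "cball (0::'a) r \<in> sets borel" for r
    by (simp add: borel_closed)
  have pointwise: "exp (f y - (norm y)^2/2) * indicator (cball 0 R) (2 *\<^sub>R y)
      \<le> exp (f y) * indicator (cball 0 \<rho>) y + exp (-(\<rho>^2/2)) * (exp (f y) * indicator (cball 0 R) y)"
    for y :: 'a
  proof (cases "norm y \<le> \<rho>")
    case True
    have "exp (f y - (norm y)^2/2) \<le> exp (f y)"
      by simp
    then show ?thesis
      using True by (auto simp: indicator_def intro: add_increasing2)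
  next
    case False
    then have "\<rho>^2 \<le> (norm y)^2"
      using \<open>0 \<le> \<rho>\<close> by (intro power_mono) auto
    then have "exp (f y - (norm y)^2/2) \<le> exp (-(\<rho>^2/2)) * exp (f y)"
      by (simp flip: exp_add)
    then show ?thesis
      using False \<open>0 \<le> R\<close> by (auto simp: indicator_def)
  qed
  have "W R \<le> 2^D * (\<integral>\<^sup>+y. exp (f y - (norm y)^2/2) * indicator (cball 0 R) (2 *\<^sub>R y) \<partial>lborel)"
    unfolding W_def D_def by (rule nn_integral_exp_le) measurable
  also have "\<dots> \<le> 2^D * (\<integral>\<^sup>+y. ennreal (exp (f y) * indicator (cball 0 \<rho>) y)
      + exp (-(\<rho>^2/2)) * ennreal (exp (f y) * indicator (cball 0 R) y) \<partial>lborel)"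
  proof (intro mult_left_mono nn_integral_mono)
    fix y :: 'a
    show "ennreal (exp (f y - (norm y)^2/2) * indicator (cball 0 R) (2 *\<^sub>R y))
      \<le> ennreal (exp (f y) * indicator (cball 0 \<rho>) y)
        + exp (-(\<rho>^2/2)) * ennreal (exp (f y) * indicator (cball 0 R) y)"
      using ennreal_leI[OF pointwise[of y]] by (simp add: ennreal_mult')
  qed simp
  also have "\<dots> = 2^D * (W \<rho> + exp (-(\<rho>^2/2)) * W R)"
    unfolding W_def by (subst nn_integral_add) (auto simp: nn_integral_cmult)
  also have "\<dots> = 2^D * W \<rho> + ennreal (2^D * exp (-(\<rho>^2/2))) * W R"
    using ennreal_power[of 2 D] by (simp add: distrib_left ennreal_mult mult.assoc)
  also have "\<dots> \<le> 2^D * W \<rho> + ennreal (1/2) * W R"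
    using radius unfolding D_def by (intro add_left_mono mult_right_mono ennreal_leI) auto
  finally have "W R \<le> 2^D * W \<rho> + W R / 2"
    by (simp add: divide_ennreal_def mult.commute)
  then have "W R \<le> 2 * (2^D * W \<rho>)"
    using nn_integral_exp_cball_finite by (intro ennreal_le_twice_if_le_add_half) (auto simp: W_def)
  then show ?thesis
    by (simp add: W_def D_def mult.assoc)
qed

lemma nn_integral_exp_finite: "(\<integral>\<^sup>+x. exp (f x) \<partial>lborel) < \<infinity>"
proof -
  obtain \<rho> :: real where "\<rho> > 0" and radius: "2^DIM('a) * exp (-(\<rho>^2/2)) \<le> 1/2"
    using exists_radius_gaussian_tail_le[of 2 "1/2" "2^DIM('a)"] by auto
  define \<mu> where "\<mu> = density lborel (\<lambda>x. ennreal (exp (f x)))"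
  have ball: "emeasure \<mu> (cball 0 r) = (\<integral>\<^sup>+x. exp (f x) * indicator (cball 0 r) x \<partial>lborel)" for r
    unfolding \<mu>_def by (subst emeasure_density) (auto simp: borel_closed ennreal_mult' ennreal_indicator)
  have "(\<integral>\<^sup>+x. exp (f x) \<partial>lborel) = emeasure \<mu> (\<Union>n. cball 0 (real n))"
  proof -
    have "(\<Union>n. cball 0 (real n)) = (UNIV :: 'a set)"
      by (auto intro: real_arch_simple)
    then show ?thesis
      unfolding \<mu>_def by (simp add: emeasure_density)
  qed
  also have "\<dots> = (SUP n. emeasure \<mu> (cball 0 (real n)))"
    by (rule SUP_emeasure_incseq[symmetric]) (auto simp: \<mu>_def borel_closed incseq_def)
  also have "\<dots> \<le> 2^(DIM('a)+1) * emeasure \<mu> (cball 0 \<rho>)"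
    unfolding ball using radius \<open>\<rho> > 0\<close> by (intro SUP_least nn_integral_exp_cball_le) auto
  also have "\<dots> < \<infinity>"
    unfolding ball using nn_integral_exp_cball_finite
    by (simp add: ennreal_mult_less_top power_less_top_ennreal)
  finally show ?thesis .
qed

lemma integrable_exp: "integrable lborel (\<lambda>x. exp (f x))"
  using nn_integral_exp_finite by (intro integrableI_nonneg) auto

lemma nn_integral_exp_eq: "(\<integral>\<^sup>+x. exp (f x) \<partial>lborel) = ennreal (\<integral>x. exp (f x) \<partial>lborel)"
  by (rule nn_integral_eq_integral[OF integrable_exp]) auto

lemma integral_exp_pos: "0 < (\<integral>x. exp (f x) \<partial>lborel)"
proof -
  have "\<not> (AE x in lborel. exp (f x) = (0::real))"
    using ae_filter_eq_bot_iff[of "lborel :: 'a measure"] by (simp add: trivial_limit_def)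
  then have "(\<integral>x. exp (f x) \<partial>lborel) \<noteq> 0"
    using integral_nonneg_eq_0_iff_AE[OF integrable_exp] by simp
  moreover have "0 \<le> (\<integral>x. exp (f x) \<partial>lborel)"
    by simp
  ultimately show ?thesis
    by linarith
qed

lemma
  shows integrable_exp_mult_norm: "integrable lborel (\<lambda>x. exp (f x) * norm x)"
    and integral_exp_mult_norm_le:
      "(\<integral>x. exp (f x) * norm x \<partial>lborel) \<le> 2^(DIM('a)+1) * (\<integral>x. exp (f x) \<partial>lborel)"
proof -
  have "(\<integral>\<^sup>+x. exp (f x) * norm x \<partial>lborel)
      \<le> 2^DIM('a) * (\<integral>\<^sup>+y. exp (f y - (norm y)^2/2) * norm (2 *\<^sub>R y) \<partial>lborel)"
    by (rule nn_integral_exp_le) auto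
  also have "\<dots> \<le> 2^DIM('a) * (\<integral>\<^sup>+y. 2 * exp (f y) \<partial>lborel)"
  proof (intro mult_left_mono nn_integral_mono)
    fix y :: 'a
    have "exp (f y - (norm y)^2/2) = exp (f y) * exp (-((norm y)^2/2))"
      by (simp flip: exp_add)
    then have "exp (f y - (norm y)^2/2) * norm (2 *\<^sub>R y) = 2 * exp (f y) * (norm y * exp (-((norm y)^2/2)))"
      by simp
    also have "\<dots> \<le> 2 * exp (f y)"
      using mult_exp_neg_half_square_le_1[of "norm y"] by simp
    finally show "ennreal (exp (f y - (norm y)^2/2) * norm (2 *\<^sub>R y)) \<le> ennreal (2 * exp (f y))"
      by (rule ennreal_leI)
  qed simp
  also have "\<dots> = ennreal (2^(DIM('a)+1) * (\<integral>x. exp (f x) \<partial>lborel))"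
    using ennreal_power[of 2 "DIM('a)"] integral_exp_pos
    by (simp add: nn_integral_cmult nn_integral_exp_eq ennreal_mult mult_ac)
  finally show "integrable lborel (\<lambda>x. exp (f x) * norm x)"
    and "(\<integral>x. exp (f x) * norm x \<partial>lborel) \<le> 2^(DIM('a)+1) * (\<integral>x. exp (f x) \<partial>lborel)"
    using integral_exp_pos by (auto intro: integrable_integral_le_if_nn_integral_le)
qed

lemma
  assumes "0 \<le> C"
  shows integrable_exp_tail: "integrable lborel (\<lambda>x. exp (f x) * indicator {x. C \<le> norm x} x)"
    and integral_exp_tail_le: "(\<integral>x. exp (f x) * indicator {x. C \<le> norm x} x \<partial>lborel)
      \<le> 2^DIM('a) * exp (-(C^2/8)) * (\<integral>x. exp (f x) \<partial>lborel)"
proof -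
  have "(\<integral>\<^sup>+x. exp (f x) * indicator {x. C \<le> norm x} x \<partial>lborel)
      \<le> 2^DIM('a) * (\<integral>\<^sup>+y. exp (f y - (norm y)^2/2) * indicator {x. C \<le> norm x} (2 *\<^sub>R y) \<partial>lborel)"
    by (rule nn_integral_exp_le) auto
  also have "\<dots> \<le> 2^DIM('a) * (\<integral>\<^sup>+y. exp (-(C^2/8)) * exp (f y) \<partial>lborel)"
  proof (intro mult_left_mono nn_integral_mono ennreal_leI)
    fix y :: 'a
    show "exp (f y - (norm y)^2/2) * indicator {x. C \<le> norm x} (2 *\<^sub>R y) \<le> exp (-(C^2/8)) * exp (f y)"
    proof (cases "C \<le> 2 * norm y")
      case True
      then have "C^2 \<le> (2 * norm y)^2"
        using \<open>0 \<le> C\<close> by (intro power_mono) auto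
      then have "f y - (norm y)^2/2 \<le> -(C^2/8) + f y"
        by (simp add: power_mult_distrib)
      then have "exp (f y - (norm y)^2/2) \<le> exp (-(C^2/8)) * exp (f y)"
        by (simp flip: exp_add)
      then show ?thesis
        using True by (simp add: indicator_def)
    qed auto
  qed simp
  also have "\<dots> = ennreal (2^DIM('a) * exp (-(C^2/8)) * (\<integral>x. exp (f x) \<partial>lborel))"
    using ennreal_power[of 2 "DIM('a)"] integral_exp_pos
    by (simp add: nn_integral_cmult nn_integral_multc nn_integral_exp_eq ennreal_mult mult_ac)
  finally show "integrable lborel (\<lambda>x. exp (f x) * indicator {x. C \<le> norm x} x)"
    and "(\<integral>x. exp (f x) * indicator {x. C \<le> norm x} x \<partial>lborel)
      \<le> 2^DIM('a) * exp (-(C^2/8)) * (\<integral>x. exp (f x) \<partial>lborel)"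
    using integral_exp_pos by (auto intro: integrable_integral_le_if_nn_integral_le)
qed

lemma integrable_affine_mult_exp: "integrable lborel (\<lambda>x. (\<gamma> \<bullet> x + a) * exp (f x))"
proof (rule Bochner_Integration.integrable_bound)
  show "integrable lborel (\<lambda>x. \<bar>a\<bar> * exp (f x) + norm \<gamma> * (exp (f x) * norm x))"
    using integrable_exp integrable_exp_mult_norm by auto
  show "AE x in lborel. norm ((\<gamma> \<bullet> x + a) * exp (f x)) \<le> norm (\<bar>a\<bar> * exp (f x) + norm \<gamma> * (exp (f x) * norm x))"
  proof (rule AE_I2)
    fix x :: 'a
    show "norm ((\<gamma> \<bullet> x + a) * exp (f x)) \<le> norm (\<bar>a\<bar> * exp (f x) + norm \<gamma> * (exp (f x) * norm x))"
      using abs_inner_add_mult_le[of "exp (f x)" \<gamma> x a] by (simp add: algebra_simps)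
  qed
qed measurable

lemma integral_affine_mult_exp_ge:
  "(a - norm \<gamma> * 2^(DIM('a)+1)) * (\<integral>x. exp (f x) \<partial>lborel) \<le> (\<integral>x. (\<gamma> \<bullet> x + a) * exp (f x) \<partial>lborel)"
proof -
  have "(a - norm \<gamma> * 2^(DIM('a)+1)) * (\<integral>x. exp (f x) \<partial>lborel)
      \<le> a * (\<integral>x. exp (f x) \<partial>lborel) - norm \<gamma> * (\<integral>x. exp (f x) * norm x \<partial>lborel)"
    using integral_exp_mult_norm_le by (simp add: algebra_simps mult_left_mono)
  also have "\<dots> = (\<integral>x. a * exp (f x) - norm \<gamma> * (exp (f x) * norm x) \<partial>lborel)"
    using integrable_exp integrable_exp_mult_norm by simp
  also have "\<dots> \<le> (\<integral>x. (\<gamma> \<bullet> x + a) * exp (f x) \<partial>lborel)"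
  proof (rule integral_mono[OF _ integrable_affine_mult_exp])
    show "integrable lborel (\<lambda>x. a * exp (f x) - norm \<gamma> * (exp (f x) * norm x))"
      using integrable_exp integrable_exp_mult_norm by auto
    fix x :: 'a
    have "a - norm \<gamma> * norm x \<le> \<gamma> \<bullet> x + a"
      using Cauchy_Schwarz_ineq2[of \<gamma> x] by linarith
    then have "(a - norm \<gamma> * norm x) * exp (f x) \<le> (\<gamma> \<bullet> x + a) * exp (f x)"
      by (rule mult_right_mono) simp
    then show "a * exp (f x) - norm \<gamma> * (exp (f x) * norm x) \<le> (\<gamma> \<bullet> x + a) * exp (f x)"
      by (simp add: algebra_simps)
  qed
  finally show ?thesis .
qed

lemma abs_set_integral_affine_mult_exp_tail_le:
  assumes "0 \<le> C"
  shows "\<bar>set_lebesgue_integral lborel {x. C \<le> norm x} (\<lambda>x. (\<gamma> \<bullet> x + a) * exp (f x))\<bar>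
    \<le> (\<bar>a\<bar> * (2^DIM('a) * exp (-(C^2/8))) + norm \<gamma> * 2^(DIM('a)+1)) * (\<integral>x. exp (f x) \<partial>lborel)"
proof -
  let ?T = "\<lambda>x. exp (f x) * indicator {x. C \<le> norm x} x"
  have "\<bar>set_lebesgue_integral lborel {x. C \<le> norm x} (\<lambda>x. (\<gamma> \<bullet> x + a) * exp (f x))\<bar>
      \<le> (\<integral>x. \<bar>indicator {x. C \<le> norm x} x * ((\<gamma> \<bullet> x + a) * exp (f x))\<bar> \<partial>lborel)"
    unfolding set_lebesgue_integral_def using integral_abs_bound by simp
  also have "\<dots> \<le> (\<integral>x. \<bar>a\<bar> * ?T x + norm \<gamma> * (exp (f x) * norm x) \<partial>lborel)"
  proof (rule integral_mono')
    show "integrable lborel (\<lambda>x. \<bar>a\<bar> * ?T x + norm \<gamma> * (exp (f x) * norm x))"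
      using integrable_exp_tail[OF assms] integrable_exp_mult_norm by auto
    fix x :: 'a
    show "\<bar>indicator {x. C \<le> norm x} x * ((\<gamma> \<bullet> x + a) * exp (f x))\<bar>
        \<le> \<bar>a\<bar> * ?T x + norm \<gamma> * (exp (f x) * norm x)"
      using abs_inner_add_mult_le[of "exp (f x)" \<gamma> x a]
      by (auto simp: indicator_def algebra_simps)
    show "0 \<le> \<bar>a\<bar> * ?T x + norm \<gamma> * (exp (f x) * norm x)"
      by simp
  qed
  also have "\<dots> = \<bar>a\<bar> * (\<integral>x. ?T x \<partial>lborel) + norm \<gamma> * (\<integral>x. exp (f x) * norm x \<partial>lborel)"
    using integrable_exp_tail[OF assms] integrable_exp_mult_norm by simp
  also have "\<dots> \<le> \<bar>a\<bar> * (2^DIM('a) * exp (-(C^2/8)) * (\<integral>x. exp (f x) \<partial>lborel))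
      + norm \<gamma> * (2^(DIM('a)+1) * (\<integral>x. exp (f x) \<partial>lborel))"
    using integral_exp_tail_le[OF assms] integral_exp_mult_norm_le
    by (intro add_mono mult_left_mono) auto
  finally show ?thesis
    by (simp add: algebra_simps)
qed

lemma affine_mult_exp_tail_ratio_le:
  assumes "0 < \<delta>" "0 \<le> C"
    and tail: "2^DIM('a) * exp (-(C^2/8)) \<le> \<delta>/2"
    and large: "2 * (norm \<gamma> * 2^(DIM('a)+1)) * (1 + \<delta>) / \<delta> < a"
  shows "0 < (\<integral>x. (\<gamma> \<bullet> x + a) * exp (f x) \<partial>lborel)
    \<and> \<bar>set_lebesgue_integral lborel {x. C \<le> norm x} (\<lambda>x. (\<gamma> \<bullet> x + a) * exp (f x))\<bar>
        / (\<integral>x. (\<gamma> \<bullet> x + a) * exp (f x) \<partial>lborel) \<le> \<delta>"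
proof -
  define g where "g = norm \<gamma> * 2^(DIM('a)+1)"
  define Z where "Z = (\<integral>x. exp (f x) \<partial>lborel)"
  define I where "I = (\<integral>x. (\<gamma> \<bullet> x + a) * exp (f x) \<partial>lborel)"
  have "0 \<le> g" "0 < Z"
    using integral_exp_pos by (auto simp: g_def Z_def)
  have large': "2 * g * (1 + \<delta>) / \<delta> < a"
    using large by (simp add: g_def)
  have "2 * g \<le> 2 * g * (1 + \<delta>) / \<delta>"
    using \<open>0 < \<delta>\<close> \<open>0 \<le> g\<close> by (simp add: field_simps)
  then have "g < a" "0 < a"
    using large' \<open>0 \<le> g\<close> by linarith+
  have "2 * g * (1 + \<delta>) \<le> a * \<delta>"
    using large' \<open>0 < \<delta>\<close> by (simp add: pos_divide_less_eq)
  have lower: "(a - g) * Z \<le> I"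
    using integral_affine_mult_exp_ge unfolding g_def Z_def I_def .
  have "0 < (a - g) * Z"
    using \<open>g < a\<close> \<open>0 < Z\<close> by simp
  then have "0 < I"
    using lower by linarith
  have "\<bar>set_lebesgue_integral lborel {x. C \<le> norm x} (\<lambda>x. (\<gamma> \<bullet> x + a) * exp (f x))\<bar>
      \<le> (a * (2^DIM('a) * exp (-(C^2/8))) + g) * Z"
    using abs_set_integral_affine_mult_exp_tail_le[OF \<open>0 \<le> C\<close>, of \<gamma> a] \<open>0 < a\<close>
    by (simp add: g_def Z_def)
  also have "\<dots> \<le> (a * (\<delta>/2) + g) * Z"
    using tail \<open>0 < a\<close> \<open>0 < Z\<close> by (intro mult_right_mono add_right_mono mult_left_mono) auto
  also have "\<dots> \<le> \<delta> * (a - g) * Z"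
  proof (rule mult_right_mono)
    show "a * (\<delta>/2) + g \<le> \<delta> * (a - g)"
      using \<open>2 * g * (1 + \<delta>) \<le> a * \<delta>\<close> by (simp add: algebra_simps)
  qed (use \<open>0 < Z\<close> in simp)
  also have "\<dots> \<le> \<delta> * I"
    using lower \<open>0 < \<delta>\<close> by (simp add: mult.assoc)
  finally show ?thesis
    using \<open>0 < I\<close> by (simp add: I_def pos_divide_le_eq mult.commute)
qed

end

lemma doubling_decay_if_hessian_le:
  fixes f :: "'a::euclidean_space \<Rightarrow> real"
  assumes f: "\<And>x. (f has_derivative (\<lambda>h. grad x \<bullet> h)) (at x)"
    and grad: "\<And>x. (grad has_derivative H x) (at x)"
    and max: "\<And>x. f x \<le> f 0"
    and hessian: "\<And>x v. v \<bullet> H x v \<le> - (1/2) * (v \<bullet> v)"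
  shows "doubling_decay f"
proof
  show "continuous_on UNIV f"
    using f by (meson continuous_at_imp_continuous_on has_derivative_continuous)
  have "grad 0 = 0"
    using f max by (rule gradient_eq_0_at_maximum)
  have three_quarters: "f (2 *\<^sub>R y) \<le> f y - 3/2 * (1/2) * (norm y)^2" for y
    using f grad \<open>grad 0 = 0\<close> hessian by (rule hessian_bound_imp_doubling_le)
  show "f (2 *\<^sub>R y) \<le> f y - (norm y)^2/2" for y
    using three_quarters[of y] zero_le_power2[of "norm y"] by linarith
qed

theorem lemma5:
  fixes \<delta> :: real
  assumes "\<delta> > 0"
  shows "\<exists>C::real. C > 0 \<and>
    (\<forall>(f :: nat \<Rightarrow> real^'d \<Rightarrow> real) (grad :: nat \<Rightarrow> real^'d \<Rightarrow> real^'d)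
       (H :: nat \<Rightarrow> real^'d \<Rightarrow> real^'d \<Rightarrow> real^'d) (\<gamma> :: real^'d) (\<beta> :: nat \<Rightarrow> real^'d).
       (\<forall>n x. (f n has_derivative (\<lambda>h. grad n x \<bullet> h)) (at x)) \<longrightarrow>
       (\<forall>n x. (grad n has_derivative H n x) (at x)) \<longrightarrow>
       (\<forall>n. strictly_concave_on UNIV (f n)) \<longrightarrow>
       (\<forall>n. \<forall>x. x \<noteq> 0 \<longrightarrow> f n x < f n 0) \<longrightarrow>
       (\<forall>n x v. v \<bullet> H n x v \<le> - (1/2) * (v \<bullet> v)) \<longrightarrow>
       filterlim (\<lambda>n. \<gamma> \<bullet> \<beta> n) at_top sequentially \<longrightarrow>
       (\<forall>\<^sub>F n in sequentially.
          (\<integral>x. (\<gamma> \<bullet> (x + \<beta> n)) * exp (f n x) \<partial>lborel) > 0 \<and>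
          \<bar>set_lebesgue_integral lborel {x. norm x \<ge> C} (\<lambda>x. (\<gamma> \<bullet> (x + \<beta> n)) * exp (f n x))\<bar>
            / (\<integral>x. (\<gamma> \<bullet> (x + \<beta> n)) * exp (f n x) \<partial>lborel) \<le> \<delta>))"
proof -
  obtain C :: real where "C > 0" and tail: "2^DIM(real^'d) * exp (-(C^2/8)) \<le> \<delta>/2"
    using exists_radius_gaussian_tail_le[of 8 "\<delta>/2" "2^DIM(real^'d)"] assms by auto
  show ?thesis
  proof (intro exI[of _ C] conjI allI impI \<open>C > 0\<close>)
    fix f :: "nat \<Rightarrow> real^'d \<Rightarrow> real" and grad :: "nat \<Rightarrow> real^'d \<Rightarrow> real^'d"
      and H :: "nat \<Rightarrow> real^'d \<Rightarrow> real^'d \<Rightarrow> real^'d" and \<gamma> :: "real^'d" and \<beta> :: "nat \<Rightarrow> real^'d"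
    assume f: "\<forall>n x. (f n has_derivative (\<lambda>h. grad n x \<bullet> h)) (at x)"
      and grad: "\<forall>n x. (grad n has_derivative H n x) (at x)"
      and "\<forall>n. strictly_concave_on UNIV (f n)" \<comment> \<open>implied by the Hessian bound; not needed\<close>
      and max: "\<forall>n. \<forall>x. x \<noteq> 0 \<longrightarrow> f n x < f n 0"
      and hessian: "\<forall>n x v. v \<bullet> H n x v \<le> - (1/2) * (v \<bullet> v)"
      and lim: "filterlim (\<lambda>n. \<gamma> \<bullet> \<beta> n) at_top sequentially"
    have decay: "doubling_decay (f n)" for n
    proof (rule doubling_decay_if_hessian_le)
      show "f n x \<le> f n 0" for x
        using max by (cases "x = 0") (auto simp: less_imp_le)
    qed (use f grad hessian in auto)
    have "\<forall>\<^sub>F n in sequentially. 2 * (norm \<gamma> * 2^(DIM(real^'d)+1)) * (1 + \<delta>) / \<delta> < \<gamma> \<bullet> \<beta> n"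
      using lim by (simp add: filterlim_at_top_dense)
    then show "\<forall>\<^sub>F n in sequentially.
        (\<integral>x. (\<gamma> \<bullet> (x + \<beta> n)) * exp (f n x) \<partial>lborel) > 0 \<and>
        \<bar>set_lebesgue_integral lborel {x. norm x \<ge> C} (\<lambda>x. (\<gamma> \<bullet> (x + \<beta> n)) * exp (f n x))\<bar>
          / (\<integral>x. (\<gamma> \<bullet> (x + \<beta> n)) * exp (f n x) \<partial>lborel) \<le> \<delta>"
    proof (rule eventually_mono)
      fix n
      assume large: "2 * (norm \<gamma> * 2^(DIM(real^'d)+1)) * (1 + \<delta>) / \<delta> < \<gamma> \<bullet> \<beta> n"
      have "(\<lambda>x. (\<gamma> \<bullet> (x + \<beta> n)) * exp (f n x)) = (\<lambda>x. (\<gamma> \<bullet> x + \<gamma> \<bullet> \<beta> n) * exp (f n x))"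
        by (simp add: inner_add_right)
      then show "(\<integral>x. (\<gamma> \<bullet> (x + \<beta> n)) * exp (f n x) \<partial>lborel) > 0 \<and>
          \<bar>set_lebesgue_integral lborel {x. norm x \<ge> C} (\<lambda>x. (\<gamma> \<bullet> (x + \<beta> n)) * exp (f n x))\<bar>
            / (\<integral>x. (\<gamma> \<bullet> (x + \<beta> n)) * exp (f n x) \<partial>lborel) \<le> \<delta>"
        using doubling_decay.affine_mult_exp_tail_ratio_le[OF decay assms _ tail large] \<open>C > 0\<close>
        by simp
    qed
  qed
qed

end
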